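(* Let $p$ be a prime, $\lambda=(\lambda_1,\dots,\lambda_l)$ a non-increasing sequence of positive integers and $\alpha\in M_l(\mathbf Z)$. Then the Pontryagin dual of the extension $\xi(\alpha)$, namely $0\to\widehat{\mathbf T[p^\lambda]}\xrightarrow{\hat q}\widehat{L(\alpha)}\xrightarrow{\hat f}\widehat{\mathbf Z/p^\lambda}\to0$, regarded (via the pairing below) as an extension over $\mathbf T[p^\lambda]$ with kernel $\mathbf Z/p^\lambda$, is equivalent to the extension $\xi(\alpha^{T})$ associated to the transpose matrix.
   Context: $\mathbf T=\mathbf R/\mathbf Z$. Let $p^\lambda:\mathbf Z^l\to\mathbf Z^l$, $(x_i)\mapsto(p^{\lambda_i}x_i)$; $\mathbf Z/p^\lambda:=\mathbf Z^l/p^\lambda\mathbf Z^l$; $\mathbf T[p^\lambda]=\{\mu\in\mathbf T^l:p^{\lambda_i}\mu_i=0\ \forall i\}$. These finite groups are mutually Pontryagin dual via $(\mu,x)\mapsto\mu_1x_1+\dots+\mu_lx_l$. Let $a_\alpha:\mathbf Z^l\to\mathbf Z/p^\lambda$ send the $i$-th standard basis vector to the class of $(\alpha_{i1},\dots,\alpha_{il})$. The extension $\xi(\alpha):0\to\mathbf Z/p^\lambda\xrightarrow{f}L(\alpha)\xrightarrow{q}\mathbf T[p^\lambda]\to0$ is defined by $L(\alpha)=(\mathbf Z/p^\lambda\oplus\mathbf Z^l)/\{(a_\alpha(x),-p^\lambda x):x\in\mathbf Z^l\}$, $f(c)=[(c,0)]$, $q([(c,y)])=(y_1/p^{\lambda_1},\dots,y_l/p^{\lambda_l})\bmod\mathbf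 Z^l$. Two extensions $0\to K\to X\to Q\to0$ and $0\to K\to X'\to Q\to0$ are equivalent if there is an isomorphism $X\to X'$ compatible with the identity maps on $K$ and $Q$. *)

theory Defs
  imports Complex_Main "HOL-Computational_Algebra.Primes" "HOL-Algebra.Coset"
begin

text \<open>Indices run over 0..l-1 (the paper's 1..l shifted by one).
  Vectors in Z^l are functions nat => int vanishing outside {0..<l}.
  lam :: nat => nat is the sequence (lambda_1..lambda_l); alpha :: nat => nat => int,
  alpha i j is the (i,j) entry. Additive groups are written as HOL-Algebra monoids.\<close>

text \<open>The circle T = R/Z, modelled by the representatives [0,1) with addition mod 1.\<close>
definition Tgrp :: "real monoid" where
  "Tgrp = \<lparr>carrier = {0..<1}, mult = (\<lambda>a b. frac (a + b)), one = 0\<rparr>"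

definition Zl :: "nat \<Rightarrow> (nat \<Rightarrow> int) monoid" where
  "Zl l = \<lparr>carrier = {x. \<forall>i\<ge>l. x i = 0}, mult = (\<lambda>x y i. x i + y i), one = (\<lambda>_. 0)\<rparr>"

definition pmul :: "nat \<Rightarrow> (nat \<Rightarrow> nat) \<Rightarrow> (nat \<Rightarrow> int) \<Rightarrow> (nat \<Rightarrow> int)" where
  "pmul p lam x = (\<lambda>i. int p ^ lam i * x i)"

definition red :: "nat \<Rightarrow> (nat \<Rightarrow> nat) \<Rightarrow> nat \<Rightarrow> (nat \<Rightarrow> int) \<Rightarrow> (nat \<Rightarrow> int)" where
  "red p lam l x = (\<lambda>i. if i < l then x i mod (int p ^ lam i) else 0)"

text \<open>Z/p^lambda = Z^l / p^lambda Z^l, modelled by canonical representatives.\<close>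
definition ZP :: "nat \<Rightarrow> (nat \<Rightarrow> nat) \<Rightarrow> nat \<Rightarrow> (nat \<Rightarrow> int) monoid" where
  "ZP p lam l = \<lparr>carrier = {x. (\<forall>i<l. 0 \<le> x i \<and> x i < int p ^ lam i) \<and> (\<forall>i\<ge>l. x i = 0)},
                 mult = (\<lambda>x y. red p lam l (\<lambda>i. x i + y i)), one = (\<lambda>_. 0)\<rparr>"

definition Tp :: "nat \<Rightarrow> (nat \<Rightarrow> nat) \<Rightarrow> nat \<Rightarrow> (nat \<Rightarrow> real) set" where
  "Tp p lam l = {\<mu>. (\<forall>i<l. 0 \<le> \<mu> i \<and> \<mu> i < 1 \<and> real p ^ lam i * \<mu> i \<in> \<int>) \<and> (\<forall>i\<ge>l. \<mu> i = 0)}"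

definition pairing :: "nat \<Rightarrow> (nat \<Rightarrow> real) \<Rightarrow> (nat \<Rightarrow> int) \<Rightarrow> real" where
  "pairing l \<mu> x = frac (\<Sum>i<l. \<mu> i * real_of_int (x i))"

definition a_map :: "nat \<Rightarrow> (nat \<Rightarrow> nat) \<Rightarrow> nat \<Rightarrow> (nat \<Rightarrow> nat \<Rightarrow> int) \<Rightarrow> (nat \<Rightarrow> int) \<Rightarrow> (nat \<Rightarrow> int)" where
  "a_map p lam l \<alpha> x = red p lam l (\<lambda>j. \<Sum>i<l. x i * \<alpha> i j)"

definition Lsum :: "nat \<Rightarrow> (nat \<Rightarrow> nat) \<Rightarrow> nat \<Rightarrow> ((nat \<Rightarrow> int) \<times> (nat \<Rightarrow> int)) monoid" where
  "Lsum p lam l = ZP p lam l \<times>\<times> Zl l"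

definition Lsub :: "nat \<Rightarrow> (nat \<Rightarrow> nat) \<Rightarrow> nat \<Rightarrow> (nat \<Rightarrow> nat \<Rightarrow> int) \<Rightarrow> ((nat \<Rightarrow> int) \<times> (nat \<Rightarrow> int)) set" where
  "Lsub p lam l \<alpha> = {(a_map p lam l \<alpha> x, (\<lambda>i. - pmul p lam x i)) | x. x \<in> carrier (Zl l)}"

definition Lgrp :: "nat \<Rightarrow> (nat \<Rightarrow> nat) \<Rightarrow> nat \<Rightarrow> (nat \<Rightarrow> nat \<Rightarrow> int) \<Rightarrow> ((nat \<Rightarrow> int) \<times> (nat \<Rightarrow> int)) set monoid" where
  "Lgrp p lam l \<alpha> = Lsum p lam l Mod Lsub p lam l \<alpha>"

definition fmap :: "nat \<Rightarrow> (nat \<Rightarrow> nat) \<Rightarrow> nat \<Rightarrow> (nat \<Rightarrow> nat \<Rightarrow> int) \<Rightarrow> (nat \<Rightarrow> int) \<Rightarrow> ((nat \<Rightarrow> int) \<times> (nat \<Rightarrow> int)) set" where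
  "fmap p lam l \<alpha> c = Lsub p lam l \<alpha> #>\<^bsub>Lsum p lam l\<^esub> (c, \<lambda>_. 0)"

definition qmap :: "nat \<Rightarrow> (nat \<Rightarrow> nat) \<Rightarrow> nat \<Rightarrow> ((nat \<Rightarrow> int) \<times> (nat \<Rightarrow> int)) set \<Rightarrow> (nat \<Rightarrow> real)" where
  "qmap p lam l C = (let z = (SOME z. z \<in> C) in
      (\<lambda>i. if i < l then frac (real_of_int (snd z i) / real p ^ lam i) else 0))"

definition pdual :: "('a, 'b) monoid_scheme \<Rightarrow> ('a \<Rightarrow> real) monoid" where
  "pdual G = \<lparr>carrier = {\<chi>. \<chi> \<in> hom G Tgrp \<and> \<chi> \<in> extensional (carrier G)},
              mult = (\<lambda>\<chi> \<psi>. \<lambda>x\<in>carrier G. frac (\<chi> x + \<psi> x)),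
              one = (\<lambda>x\<in>carrier G. 0)\<rparr>"

definition ext_equiv :: "('k, 'c) monoid_scheme \<Rightarrow> ('x, 'd) monoid_scheme \<Rightarrow> ('k \<Rightarrow> 'x) \<Rightarrow> ('x \<Rightarrow> 'q)
     \<Rightarrow> ('y, 'e) monoid_scheme \<Rightarrow> ('k \<Rightarrow> 'y) \<Rightarrow> ('y \<Rightarrow> 'q) \<Rightarrow> bool" where
  "ext_equiv K X i \<pi> X' i' \<pi>' \<longleftrightarrow>
     (\<exists>\<phi>. \<phi> \<in> iso X X' \<and> (\<forall>k\<in>carrier K. \<phi> (i k) = i' k) \<and> (\<forall>x\<in>carrier X. \<pi>' (\<phi> x) = \<pi> x))"

text \<open>The dual extension of xi(alpha), transported along the pairing identifications
  Z/p^lambda = dual(T[p^lambda]) and dual(Z/p^lambda) = T[p^lambda]: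
  kernel map  c |-> q^(pairing(-,c))  and quotient map  chi |-> the mu with chi o f = pairing(mu,-).\<close>
definition dual_incl :: "nat \<Rightarrow> (nat \<Rightarrow> nat) \<Rightarrow> nat \<Rightarrow> (nat \<Rightarrow> nat \<Rightarrow> int) \<Rightarrow> (nat \<Rightarrow> int)
     \<Rightarrow> (((nat \<Rightarrow> int) \<times> (nat \<Rightarrow> int)) set \<Rightarrow> real)" where
  "dual_incl p lam l \<alpha> c = (\<lambda>L\<in>carrier (Lgrp p lam l \<alpha>). pairing l (qmap p lam l L) c)"

definition dual_proj :: "nat \<Rightarrow> (nat \<Rightarrow> nat) \<Rightarrow> nat \<Rightarrow> (nat \<Rightarrow> nat \<Rightarrow> int)
     \<Rightarrow> (((nat \<Rightarrow> int) \<times> (nat \<Rightarrow> int)) set \<Rightarrow> real) \<Rightarrow> (nat \<Rightarrow> real)" where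
  "dual_proj p lam l \<alpha> \<chi> = (THE \<mu>. \<mu> \<in> Tp p lam l \<and>
      (\<forall>x\<in>carrier (ZP p lam l). \<chi> (fmap p lam l \<alpha> x) = pairing l \<mu> x))"

end

theory Submission
  imports Defs
begin

text \<open>
  Lift the duality to representatives: for (c, y) and (d, w) in Z/p^\<lambda> \<oplus> Z^l put
    \<langle>(c, y), (d, w)\<rangle> = \<Sum>_j (y_j d_j + c_j w_j) / p^\<lambda>_j + \<Sum>_i_j w_i \<alpha>_ij y_j / (p^\<lambda>_i p^\<lambda>_j)  mod 1.
  It is additive in each variable and vanishes as soon as the left argument is a relation
  (a_\<alpha>^T(x), -p^\<lambda> x) of L(\<alpha>^T) or the right one a relation of L(\<alpha>), so it defines a
  homomorphism L(\<alpha>^T) \<rightarrow> Hom(L(\<alpha>), T).  Pairing with the classes of (e_k, 0) and (0, e_k)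
  shows that its kernel is trivial.  It is onto: a character of L(\<alpha>) is a character
  (d, w) \<mapsto> \<Sum> \<mu>_j d_j + \<Sum> \<nu>_i w_i of Z/p^\<lambda> \<oplus> Z^l killing the relations, i.e. with
  p^\<lambda>_j \<mu>_j \<in> Z and p^\<lambda>_k \<nu>_k \<equiv> \<Sum>_j \<alpha>_kj \<mu>_j mod Z, and these conditions say exactly that
  it is the pairing with the class of (p^\<lambda> \<nu> - \<alpha> \<mu> mod p^\<lambda>, p^\<lambda> \<mu>).  Against f(Z/p^\<lambda>) the
  pairing only sees the coordinate y of the other argument, through q = y / p^\<lambda> mod 1,
  which gives the compatibility with the kernel and quotient maps.
\<close>

lemma frac_eq_iff_diff_Ints: "frac a = frac b \<longleftrightarrow> a - (b::real) \<in> \<int>"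
proof
  assume "frac a = frac b"
  then show "a - b \<in> \<int>" by (elim frac_eqE) simp
next
  assume "a - b \<in> \<int>"
  have eq: "a - frac b = (a - b) + of_int \<lfloor>b\<rfloor>" by (simp add: frac_def)
  have "a - frac b \<in> \<int>" unfolding eq using \<open>a - b \<in> \<int>\<close> by (intro Ints_add Ints_of_int)
  then show "frac a = frac b" by (simp add: frac_unique_iff frac_lt_1)
qed

lemma frac_frac_diff [simp]: "frac (frac a - b) = frac (a - (b::real))"
  unfolding frac_eq_iff_diff_Ints by (simp add: frac_def)

lemma frac_sum_frac_mult:
  fixes a :: "'a \<Rightarrow> real"
  shows "frac (\<Sum>i\<in>A. frac (a i) * of_int (k i)) = frac (\<Sum>i\<in>A. a i * of_int (k i))"
proof -
  have "(\<Sum>i\<in>A. frac (a i) * of_int (k i)) - (\<Sum>i\<in>A. a i * of_int (k i))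
      = (\<Sum>i\<in>A. (frac (a i) - a i) * of_int (k i))"
    by (simp only: sum_subtractf[symmetric] left_diff_distrib)
  also have "\<dots> = (\<Sum>i\<in>A. of_int (- \<lfloor>a i\<rfloor> * k i))"
    by (rule sum.cong) (simp_all add: frac_def)
  also have "\<dots> \<in> \<int>" by (intro Ints_sum Ints_of_int)
  finally show ?thesis unfolding frac_eq_iff_diff_Ints .
qed

lemma of_int_divide_in_Ints_iff:
  assumes "b \<noteq> 0" shows "(of_int a / of_int b :: real) \<in> \<int> \<longleftrightarrow> b dvd a"
proof
  assume "(of_int a / of_int b :: real) \<in> \<int>"
  then obtain k where "(of_int a / of_int b :: real) = of_int k" by (elim Ints_cases)
  then have "a = b * k" using assms by (simp add: field_simps flip: of_int_mult)
  then show "b dvd a" ..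
qed (use assms in \<open>auto simp: of_int_divide_in_Ints\<close>)

lemma mod_eq_of_dvd_add:
  fixes c s m :: int
  assumes "0 \<le> c" "c < m" "m dvd c + s" shows "c = (- s) mod m"
proof -
  have "c = c mod m" using assms(1,2) by (rule mod_pos_pos_trivial[symmetric])
  also have "\<dots> = (- s) mod m" using assms(3) by (simp only: mod_eq_dvd_iff diff_minus_eq_add)
  finally show ?thesis .
qed

lemma (in group) FactGroup_rep:
  assumes "subgroup H G" and "X \<in> carrier (G Mod H)"
  shows "(SOME x. x \<in> X) \<in> X" and "(SOME x. x \<in> X) \<in> carrier G" and "X = H #> (SOME x. x \<in> X)"
proof -
  obtain x where x: "x \<in> carrier G" "X = H #> x"
    using assms(2) by (auto simp: carrier_FactGroup)
  then have "x \<in> X" using rcos_self assms(1) by blast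
  then show rep: "(SOME x. x \<in> X) \<in> X" by (rule someI)
  then show "(SOME x. x \<in> X) \<in> carrier G"
    using x r_coset_subset_G subgroup.subset[OF assms(1)] by blast
  show "X = H #> (SOME x. x \<in> X)" using repr_independence[OF _ x(1) assms(1)] rep x(2) by simp
qed

lemma (in group) FactGroup_mem_diff:
  assumes "subgroup H G" and "X \<in> carrier (G Mod H)" and "x \<in> X" and "y \<in> X"
  shows "\<exists>h\<in>H. y = h \<otimes> x"
proof -
  obtain z where "z \<in> carrier G" "X = H #> z" using assms(2) by (auto simp: carrier_FactGroup)
  then have "X = H #> x" using repr_independence assms(1,3) by metis
  then show ?thesis using assms(4) by (auto simp: r_coset_def)
qed

section \<open>The circle group and Pontryagin duals\<close>

lemma Tgrp_comm_group: "comm_group Tgrp"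
proof (rule comm_groupI)
  fix x assume "x \<in> carrier Tgrp"
  show "\<exists>y\<in>carrier Tgrp. y \<otimes>\<^bsub>Tgrp\<^esub> x = \<one>\<^bsub>Tgrp\<^esub>"
    by (rule bexI[of _ "frac (- x)"]) (simp_all add: Tgrp_def frac_lt_1)
qed (auto simp: Tgrp_def frac_lt_1 ac_simps)

lemma Tgrp_inv: "x \<in> carrier Tgrp \<Longrightarrow> inv\<^bsub>Tgrp\<^esub> x = frac (- x)"
  by (intro group.inv_equality comm_group.axioms(2) Tgrp_comm_group)
     (auto simp: Tgrp_def frac_lt_1)

lemma Tgrp_nat_pow: "x \<in> carrier Tgrp \<Longrightarrow> x [^]\<^bsub>Tgrp\<^esub> (n::nat) = frac (of_nat n * x)"
  by (induction n) (auto simp: Tgrp_def distrib_right add.commute)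

lemma Tgrp_int_pow:
  assumes "x \<in> carrier Tgrp" shows "x [^]\<^bsub>Tgrp\<^esub> (k::int) = frac (of_int k * x)"
proof (cases "k < 0")
  case True
  have "frac (of_nat (nat (- k)) * x) \<in> carrier Tgrp" by (simp add: Tgrp_def frac_lt_1)
  then have "x [^]\<^bsub>Tgrp\<^esub> k = frac (- (of_nat (nat (- k)) * x))"
    using True assms by (simp add: int_pow_def2 Tgrp_nat_pow Tgrp_inv frac_neg_frac del: pow_nat)
  then show ?thesis using True by simp
next
  case False
  then show ?thesis using assms by (simp add: int_pow_def2 Tgrp_nat_pow del: pow_nat)
qed

lemma character_mult:
  "\<chi> \<in> hom G Tgrp \<Longrightarrow> x \<in> carrier G \<Longrightarrow> y \<in> carrier G \<Longrightarrow> \<chi> (x \<otimes>\<^bsub>G\<^esub> y) = frac (\<chi> x + \<chi> y)"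
  by (simp add: hom_def Tgrp_def)

lemma character_range: "\<chi> \<in> hom G Tgrp \<Longrightarrow> x \<in> carrier G \<Longrightarrow> \<chi> x \<in> {0..<1}"
  by (auto simp: hom_def Tgrp_def)

lemma pdual_comm_group:
  assumes G: "monoid G" shows "comm_group (pdual G)"
proof (rule comm_groupI)
  fix \<chi> \<psi> assume "\<chi> \<in> carrier (pdual G)" "\<psi> \<in> carrier (pdual G)"
  then have \<chi>: "\<chi> \<in> hom G Tgrp" and \<psi>: "\<psi> \<in> hom G Tgrp" by (simp_all add: pdual_def)
  have "(\<lambda>x\<in>carrier G. frac (\<chi> x + \<psi> x)) \<in> hom G Tgrp"
  proof (rule homI)
    fix x y assume "x \<in> carrier G" "y \<in> carrier G"
    then show "(\<lambda>x\<in>carrier G. frac (\<chi> x + \<psi> x)) (x \<otimes>\<^bsub>G\<^esub> y)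
        = (\<lambda>x\<in>carrier G. frac (\<chi> x + \<psi> x)) x \<otimes>\<^bsub>Tgrp\<^esub> (\<lambda>x\<in>carrier G. frac (\<chi> x + \<psi> x)) y"
      using character_mult[OF \<chi>] character_mult[OF \<psi>] monoid.m_closed[OF G]
      by (simp add: Tgrp_def) (rule arg_cong[where f = frac], linarith)
  qed (simp add: Tgrp_def frac_lt_1)
  then show "\<chi> \<otimes>\<^bsub>pdual G\<^esub> \<psi> \<in> carrier (pdual G)" by (simp add: pdual_def)
next
  have "(\<lambda>x\<in>carrier G. 0) \<in> hom G Tgrp"
    using monoid.m_closed[OF G] by (intro homI) (simp_all add: Tgrp_def)
  then show "\<one>\<^bsub>pdual G\<^esub> \<in> carrier (pdual G)" by (simp add: pdual_def)
next
  fix \<chi> \<psi> \<theta> :: "'a \<Rightarrow> real"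
  show "\<chi> \<otimes>\<^bsub>pdual G\<^esub> \<psi> \<otimes>\<^bsub>pdual G\<^esub> \<theta> = \<chi> \<otimes>\<^bsub>pdual G\<^esub> (\<psi> \<otimes>\<^bsub>pdual G\<^esub> \<theta>)"
    by (simp add: pdual_def add.assoc cong: restrict_cong)
  show "\<chi> \<otimes>\<^bsub>pdual G\<^esub> \<psi> = \<psi> \<otimes>\<^bsub>pdual G\<^esub> \<chi>"
    by (simp add: pdual_def add.commute cong: restrict_cong)
next
  fix \<chi> assume "\<chi> \<in> carrier (pdual G)"
  then have \<chi>: "\<chi> \<in> hom G Tgrp" and ext: "\<chi> \<in> extensional (carrier G)"
    by (simp_all add: pdual_def)
  have "frac (\<chi> x) = \<chi> x" if "x \<in> carrier G" for x
    using character_range[OF \<chi> that] by simp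
  then show "\<one>\<^bsub>pdual G\<^esub> \<otimes>\<^bsub>pdual G\<^esub> \<chi> = \<chi>"
    using extensional_restrict[OF ext] by (simp add: pdual_def cong: restrict_cong)
  have "(\<lambda>x\<in>carrier G. frac (- \<chi> x)) \<in> hom G Tgrp"
  proof (rule homI)
    fix x y assume "x \<in> carrier G" "y \<in> carrier G"
    then show "(\<lambda>x\<in>carrier G. frac (- \<chi> x)) (x \<otimes>\<^bsub>G\<^esub> y)
        = (\<lambda>x\<in>carrier G. frac (- \<chi> x)) x \<otimes>\<^bsub>Tgrp\<^esub> (\<lambda>x\<in>carrier G. frac (- \<chi> x)) y"
      using character_mult[OF \<chi>] monoid.m_closed[OF G]
      by (simp add: Tgrp_def frac_neg_frac) (rule arg_cong[where f = frac], linarith)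
  qed (simp add: Tgrp_def frac_lt_1)
  moreover have "(\<lambda>x\<in>carrier G. frac (- \<chi> x)) \<otimes>\<^bsub>pdual G\<^esub> \<chi> = \<one>\<^bsub>pdual G\<^esub>"
    by (simp add: pdual_def cong: restrict_cong)
  ultimately show "\<exists>\<psi>\<in>carrier (pdual G). \<psi> \<otimes>\<^bsub>pdual G\<^esub> \<chi> = \<one>\<^bsub>pdual G\<^esub>"
    by (auto simp: pdual_def)
qed

section \<open>The groups Z^l and Z/p^\<lambda>\<close>

lemma Zl_comm_group: "comm_group (Zl l)"
proof (rule comm_groupI)
  fix x assume "x \<in> carrier (Zl l)"
  then show "\<exists>y\<in>carrier (Zl l). y \<otimes>\<^bsub>Zl l\<^esub> x = \<one>\<^bsub>Zl l\<^esub>"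
    by (intro bexI[of _ "\<lambda>i. - x i"]) (auto simp: Zl_def)
qed (auto simp: Zl_def add.assoc add.commute)

lemma Zl_inv: "x \<in> carrier (Zl l) \<Longrightarrow> inv\<^bsub>Zl l\<^esub> x = (\<lambda>i. - x i)"
  by (intro group.inv_equality comm_group.axioms(2) Zl_comm_group) (auto simp: Zl_def)

lemma Zl_nat_pow: "x \<in> carrier (Zl l) \<Longrightarrow> x [^]\<^bsub>Zl l\<^esub> (n::nat) = (\<lambda>i. int n * x i)"
  by (induction n) (auto simp: Zl_def fun_eq_iff algebra_simps)

lemma Zl_int_pow:
  assumes "x \<in> carrier (Zl l)" shows "x [^]\<^bsub>Zl l\<^esub> (k::int) = (\<lambda>i. k * x i)"
proof (cases "k < 0")
  case True
  have "(\<lambda>i. int (nat (- k)) * x i) \<in> carrier (Zl l)" using assms by (simp add: Zl_def)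
  then show ?thesis
    using True assms by (simp add: int_pow_def2 Zl_nat_pow Zl_inv del: pow_nat)
next
  case False
  then show ?thesis using assms by (simp add: int_pow_def2 Zl_nat_pow del: pow_nat)
qed

definition unit_vec :: "nat \<Rightarrow> nat \<Rightarrow> int" where
  "unit_vec k = (\<lambda>i. if i = k then 1 else 0)"

lemma unit_vec_Zl: "k < l \<Longrightarrow> unit_vec k \<in> carrier (Zl l)"
  by (simp add: unit_vec_def Zl_def)

lemma character_Zl:
  assumes \<psi>: "\<psi> \<in> hom (Zl l) Tgrp" and w: "w \<in> carrier (Zl l)"
  shows "\<psi> w = frac (\<Sum>i<l. of_int (w i) * \<psi> (unit_vec i))"
proof -
  interpret \<psi>: group_hom "Zl l" Tgrp \<psi>
    using \<psi> Zl_comm_group Tgrp_comm_group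
    by (simp add: group_hom_def group_hom_axioms_def comm_group.axioms(2))
  have "\<psi> w = frac (\<Sum>i<n. of_int (w i) * \<psi> (unit_vec i))"
    if "n \<le> l" "w \<in> carrier (Zl l)" "\<forall>i\<ge>n. w i = 0" for n w
    using that
  proof (induction n arbitrary: w)
    case 0
    then have "w = \<one>\<^bsub>Zl l\<^esub>" by (auto simp: Zl_def)
    then show ?case by (simp add: Tgrp_def)
  next
    case (Suc n)
    define v where "v = w(n := 0)"
    have v: "v \<in> carrier (Zl l)" "\<forall>i\<ge>n. v i = 0" using Suc.prems by (auto simp: v_def Zl_def)
    have e: "unit_vec n \<in> carrier (Zl l)" using Suc.prems(1) by (simp add: unit_vec_Zl)
    then have pow: "unit_vec n [^]\<^bsub>Zl l\<^esub> w n = (\<lambda>i. w n * unit_vec n i)" by (rule Zl_int_pow)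
    then have pow_Zl: "unit_vec n [^]\<^bsub>Zl l\<^esub> w n \<in> carrier (Zl l)"
      using Suc.prems(1) by (simp add: Zl_def unit_vec_def)
    have "w = v \<otimes>\<^bsub>Zl l\<^esub> unit_vec n [^]\<^bsub>Zl l\<^esub> w n"
      using pow by (auto simp: v_def Zl_def unit_vec_def fun_eq_iff)
    then have "\<psi> w = frac (\<psi> v + \<psi> (unit_vec n [^]\<^bsub>Zl l\<^esub> w n))"
      using \<psi>.hom_mult[OF v(1) pow_Zl] by (simp add: Tgrp_def)
    also have "\<psi> (unit_vec n [^]\<^bsub>Zl l\<^esub> w n) = frac (of_int (w n) * \<psi> (unit_vec n))"
      using \<psi>.hom_int_pow[OF e] Tgrp_int_pow[OF \<psi>.hom_closed[OF e]] by simp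
    also have "\<psi> v = frac (\<Sum>i<n. of_int (v i) * \<psi> (unit_vec i))"
      using Suc.IH[OF _ v] Suc.prems(1) by simp
    also have "(\<Sum>i<n. of_int (v i) * \<psi> (unit_vec i)) = (\<Sum>i<n. of_int (w i) * \<psi> (unit_vec i))"
      by (intro sum.cong) (auto simp: v_def)
    finally show ?case by simp
  qed
  from this[OF order_refl w] w show ?thesis by (simp add: Zl_def)
qed

lemma red_ZP: "0 < p \<Longrightarrow> red p lam l x \<in> carrier (ZP p lam l)"
  by (simp add: red_def ZP_def)

lemma red_eq_self: "x \<in> carrier (ZP p lam l) \<Longrightarrow> red p lam l x = x"
  by (auto simp: red_def ZP_def fun_eq_iff)

lemma red_dvd_diff: "j < l \<Longrightarrow> int p ^ lam j dvd red p lam l x j - x j"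
  by (simp add: red_def mod_eq_dvd_iff[symmetric])

lemma ZP_comm_group:
  assumes p: "0 < p" shows "comm_group (ZP p lam l)"
proof (rule comm_groupI)
  fix x y assume "x \<in> carrier (ZP p lam l)" "y \<in> carrier (ZP p lam l)"
  then show "x \<otimes>\<^bsub>ZP p lam l\<^esub> y \<in> carrier (ZP p lam l)"
    using p by (simp add: ZP_def red_def)
next
  show "\<one>\<^bsub>ZP p lam l\<^esub> \<in> carrier (ZP p lam l)" using p by (simp add: ZP_def)
next
  fix x y z :: "nat \<Rightarrow> int"
  show "x \<otimes>\<^bsub>ZP p lam l\<^esub> y \<otimes>\<^bsub>ZP p lam l\<^esub> z = x \<otimes>\<^bsub>ZP p lam l\<^esub> (y \<otimes>\<^bsub>ZP p lam l\<^esub> z)"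
    by (auto simp: ZP_def red_def fun_eq_iff mod_add_left_eq mod_add_right_eq add.assoc)
  show "x \<otimes>\<^bsub>ZP p lam l\<^esub> y = y \<otimes>\<^bsub>ZP p lam l\<^esub> x"
    by (auto simp: ZP_def red_def fun_eq_iff add.commute)
next
  fix x assume "x \<in> carrier (ZP p lam l)"
  then show "\<one>\<^bsub>ZP p lam l\<^esub> \<otimes>\<^bsub>ZP p lam l\<^esub> x = x"
    by (auto simp: ZP_def red_def fun_eq_iff)
  show "\<exists>y\<in>carrier (ZP p lam l). y \<otimes>\<^bsub>ZP p lam l\<^esub> x = \<one>\<^bsub>ZP p lam l\<^esub>"
  proof
    show "red p lam l (\<lambda>i. - x i) \<in> carrier (ZP p lam l)" using p by (rule red_ZP)
    show "red p lam l (\<lambda>i. - x i) \<otimes>\<^bsub>ZP p lam l\<^esub> x = \<one>\<^bsub>ZP p lam l\<^esub>"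
      by (auto simp: ZP_def red_def fun_eq_iff mod_add_left_eq)
  qed
qed

lemma Lsum_comm_group:
  assumes "0 < p" shows "comm_group (Lsum p lam l)"
proof -
  interpret A: comm_group "ZP p lam l" using ZP_comm_group assms by blast
  interpret B: comm_group "Zl l" using Zl_comm_group by blast
  have "group (Lsum p lam l)"
    unfolding Lsum_def by (rule DirProd_group) (simp_all add: A.is_group B.is_group)
  then show ?thesis
    by (rule group.group_comm_groupI) (auto simp: Lsum_def DirProd_def A.m_comm B.m_comm)
qed

section \<open>The duality between L(\<alpha>^T) and L(\<alpha>)\<close>

text \<open>Input only: as a printing abbreviation the pattern \<open>\<lambda>i j. \<alpha> j i\<close> would match every
  binary function and make the pretty printer loop.\<close>
abbreviation (input) transposed :: "('a \<Rightarrow> 'a \<Rightarrow> 'b) \<Rightarrow> 'a \<Rightarrow> 'a \<Rightarrow> 'b" where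
  "transposed \<alpha> \<equiv> \<lambda>i j. \<alpha> j i"

locale dual_setting =
  fixes p :: nat and lam :: "nat \<Rightarrow> nat" and l :: nat
  assumes p_gt_1: "1 < p" and lam_pos: "\<forall>i<l. 0 < lam i"
begin

abbreviation S where "S \<equiv> Lsum p lam l"
abbreviation K where "K \<equiv> Lsub p lam l"
abbreviation L where "L \<equiv> Lgrp p lam l"
abbreviation P :: "nat \<Rightarrow> real" where "P j \<equiv> real p ^ lam j"

lemma p_pos: "0 < p"
  using p_gt_1 by simp

lemma P_nonzero: "P j \<noteq> 0"
  using p_pos by simp

sublocale S: comm_group S
  by (rule Lsum_comm_group[OF p_pos])

lemma unit_vec_ZP: "k < l \<Longrightarrow> unit_vec k \<in> carrier (ZP p lam l)"
  using p_gt_1 lam_pos by (auto simp: unit_vec_def ZP_def one_less_power)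

definition relation_map :: "(nat \<Rightarrow> nat \<Rightarrow> int) \<Rightarrow> (nat \<Rightarrow> int) \<Rightarrow> (nat \<Rightarrow> int) \<times> (nat \<Rightarrow> int)" where
  "relation_map \<alpha> x = (a_map p lam l \<alpha> x, \<lambda>i. - pmul p lam x i)"

lemma relation_map_hom: "relation_map \<alpha> \<in> hom (Zl l) S"
proof (rule homI)
  fix x assume "x \<in> carrier (Zl l)"
  then show "relation_map \<alpha> x \<in> carrier S"
    using p_pos by (auto simp: relation_map_def Lsum_def a_map_def red_ZP Zl_def pmul_def)
next
  fix x y assume "x \<in> carrier (Zl l)" "y \<in> carrier (Zl l)"
  then show "relation_map \<alpha> (x \<otimes>\<^bsub>Zl l\<^esub> y) = relation_map \<alpha> x \<otimes>\<^bsub>S\<^esub> relation_map \<alpha> y"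
    by (auto simp: relation_map_def Lsum_def DirProd_def Zl_def ZP_def a_map_def red_def pmul_def
        fun_eq_iff distrib_left distrib_right sum.distrib mod_add_left_eq mod_add_right_eq)
qed

lemma K_eq_image: "K \<alpha> = relation_map \<alpha> ` carrier (Zl l)"
  by (auto simp: Lsub_def relation_map_def)

lemma K_subgroup: "subgroup (K \<alpha>) S"
proof -
  have "group_hom (Zl l) S (relation_map \<alpha>)"
    using Zl_comm_group relation_map_hom
    by (simp add: group_hom_def group_hom_axioms_def comm_group.axioms(2) S.is_group)
  then show ?thesis unfolding K_eq_image by (rule group_hom.img_is_subgroup)
qed

lemma L_group: "group (L \<alpha>)"
  unfolding Lgrp_def by (rule normal.factorgroup_is_group[OF S.subgroup_imp_normal[OF K_subgroup]])

lemma rep_in_coset: "X \<in> carrier (L \<alpha>) \<Longrightarrow> (SOME z. z \<in> X) \<in> X"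
  using S.FactGroup_rep(1)[OF K_subgroup] by (simp add: Lgrp_def)

lemma rep_in_carrier: "X \<in> carrier (L \<alpha>) \<Longrightarrow> (SOME z. z \<in> X) \<in> carrier S"
  using S.FactGroup_rep(2)[OF K_subgroup] by (simp add: Lgrp_def)

lemma coset_rep: "X \<in> carrier (L \<alpha>) \<Longrightarrow> X = K \<alpha> #>\<^bsub>S\<^esub> (SOME z. z \<in> X)"
  using S.FactGroup_rep(3)[OF K_subgroup] by (simp add: Lgrp_def)

lemma coset_in_L: "z \<in> carrier S \<Longrightarrow> K \<alpha> #>\<^bsub>S\<^esub> z \<in> carrier (L \<alpha>)"
  by (auto simp: Lgrp_def carrier_FactGroup)

lemma mem_own_coset: "z \<in> carrier S \<Longrightarrow> z \<in> K \<alpha> #>\<^bsub>S\<^esub> z"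
  by (rule S.rcos_self[OF _ K_subgroup])

lemma mult_L_mem:
  "u \<in> Y \<Longrightarrow> u' \<in> Y' \<Longrightarrow> u \<otimes>\<^bsub>S\<^esub> u' \<in> Y \<otimes>\<^bsub>L \<alpha>\<^esub> Y'"
  by (auto simp: Lgrp_def set_mult_def)

lemma L_mult_closed: "Y \<in> carrier (L \<alpha>) \<Longrightarrow> Y' \<in> carrier (L \<alpha>) \<Longrightarrow> Y \<otimes>\<^bsub>L \<alpha>\<^esub> Y' \<in> carrier (L \<alpha>)"
  by (rule monoid.m_closed[OF group.is_monoid[OF L_group]])

text \<open>For \<open>z = (c, y)\<close> representing an element of \<open>L(\<alpha>^T)\<close> and \<open>u = (d, w)\<close> one of
  \<open>L(\<alpha>)\<close>, \<open>frac (bil \<alpha> z u)\<close> is the duality pairing of the two classes.\<close>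
definition bil :: "(nat \<Rightarrow> nat \<Rightarrow> int) \<Rightarrow> (nat \<Rightarrow> int) \<times> (nat \<Rightarrow> int) \<Rightarrow> (nat \<Rightarrow> int) \<times> (nat \<Rightarrow> int) \<Rightarrow> real" where
  "bil \<alpha> z u = (\<Sum>j<l. of_int (snd z j * fst u j + fst z j * snd u j) / P j)
             + (\<Sum>i<l. of_int (snd u i) / P i * (\<Sum>j<l. of_int (\<alpha> i j * snd z j) / P j))"

lemma bil_transposed: "bil (transposed \<alpha>) u z = bil \<alpha> z u"
proof -
  have "(\<Sum>i<l. of_int (snd z i) / P i * (\<Sum>j<l. of_int (\<alpha> j i * snd u j) / P j))
      = (\<Sum>i<l. \<Sum>j<l. of_int (snd z i) / P i * (of_int (\<alpha> j i * snd u j) / P j))"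
    by (simp add: sum_distrib_left)
  also have "\<dots> = (\<Sum>j<l. \<Sum>i<l. of_int (snd z i) / P i * (of_int (\<alpha> j i * snd u j) / P j))"
    by (rule sum.swap)
  also have "\<dots> = (\<Sum>j<l. \<Sum>i<l. of_int (snd u j) / P j * (of_int (\<alpha> j i * snd z i) / P i))"
    by (intro sum.cong refl) (simp add: field_simps)
  also have "\<dots> = (\<Sum>j<l. of_int (snd u j) / P j * (\<Sum>i<l. of_int (\<alpha> j i * snd z i) / P i))"
    by (simp add: sum_distrib_left)
  finally show ?thesis
    unfolding bil_def by (simp add: algebra_simps)
qed

lemma bil_add_right:
  "bil \<alpha> z (\<lambda>j. d j + d' j, \<lambda>i. w i + w' i) = bil \<alpha> z (d, w) + bil \<alpha> z (d', w')"
  unfolding bil_def by (simp add: algebra_simps add_divide_distrib sum.distrib)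

lemma bil_dvd_right:
  assumes "\<forall>j<l. int p ^ lam j dvd d' j - d j"
  shows "bil \<alpha> z (d', w) - bil \<alpha> z (d, w) \<in> \<int>"
proof -
  define m where "m j = (d' j - d j) div int p ^ lam j" for j
  have "of_int (snd z j * d' j + fst z j * w j) / P j
      = of_int (snd z j * d j + fst z j * w j) / P j + of_int (snd z j * m j)" if "j < l" for j
  proof -
    have "d' j = d j + int p ^ lam j * m j" using assms that by (simp add: m_def)
    then show ?thesis using P_nonzero[of j] by (simp add: field_simps)
  qed
  then have "bil \<alpha> z (d', w) = bil \<alpha> z (d, w) + (\<Sum>j<l. of_int (snd z j * m j))"
    unfolding bil_def by (simp add: sum.distrib)
  moreover have "(\<Sum>j<l. of_int (snd z j * m j) :: real) \<in> \<int>" by (intro Ints_sum Ints_of_int)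
  ultimately show ?thesis by simp
qed

lemma bil_relation_right:
  "bil \<alpha> (c, y) (\<lambda>j. \<Sum>i<l. x i * \<alpha> i j, \<lambda>i. - (int p ^ lam i * x i)) = - (\<Sum>j<l. of_int (c j * x j))"
proof -
  define A where "A i = (\<Sum>j<l. of_int (\<alpha> i j * y j) / P j)" for i
  have first: "of_int (y j * (\<Sum>i<l. x i * \<alpha> i j) + c j * - (int p ^ lam j * x j)) / P j
      = (\<Sum>i<l. of_int (x i * \<alpha> i j * y j) / P j) - of_int (c j * x j)" for j
  proof -
    have "of_int (y j * (\<Sum>i<l. x i * \<alpha> i j) + c j * - (int p ^ lam j * x j))
        = (\<Sum>i<l. of_int (x i * \<alpha> i j * y j)) - P j * of_int (c j * x j)"
      by (simp add: sum_distrib_left algebra_simps)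
    then show ?thesis using p_pos by (simp add: sum_divide_distrib diff_divide_distrib)
  qed
  have second: "of_int (- (int p ^ lam i * x i)) / P i * A i = - (of_int (x i) * A i)" for i
    using p_pos by simp
  have "(\<Sum>j<l. \<Sum>i<l. of_int (x i * \<alpha> i j * y j) / P j) = (\<Sum>i<l. \<Sum>j<l. of_int (x i * \<alpha> i j * y j) / P j)"
    by (rule sum.swap)
  also have "\<dots> = (\<Sum>i<l. of_int (x i) * A i)"
    by (simp add: A_def sum_distrib_left mult.assoc)
  finally show ?thesis
    unfolding bil_def fst_conv snd_conv first second A_def[symmetric]
    by (simp add: sum_subtractf sum_negf)
qed

lemma bil_red_right: "bil \<alpha> z (red p lam l d, w) - bil \<alpha> z (d, w) \<in> \<int>"
  by (rule bil_dvd_right) (simp add: red_dvd_diff)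

lemma frac_bil_mult_right: "frac (bil \<alpha> z (u \<otimes>\<^bsub>S\<^esub> u')) = frac (bil \<alpha> z u + bil \<alpha> z u')"
proof -
  obtain d w d' w' where u: "u = (d, w)" "u' = (d', w')" by fastforce
  have "u \<otimes>\<^bsub>S\<^esub> u' = (red p lam l (\<lambda>j. d j + d' j), \<lambda>i. w i + w' i)"
    by (simp add: u Lsum_def DirProd_def ZP_def Zl_def)
  then have "bil \<alpha> z (u \<otimes>\<^bsub>S\<^esub> u') - bil \<alpha> z (\<lambda>j. d j + d' j, \<lambda>i. w i + w' i) \<in> \<int>"
    using bil_red_right by simp
  then show ?thesis
    unfolding frac_eq_iff_diff_Ints bil_add_right u .
qed

lemma bil_K_right:
  assumes "g \<in> K \<alpha>" shows "bil \<alpha> z g \<in> \<int>"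
proof -
  obtain x where g: "g = relation_map \<alpha> x" using assms by (auto simp: K_eq_image)
  obtain c y where z: "z = (c, y)" by fastforce
  let ?v = "(\<lambda>j. \<Sum>i<l. x i * \<alpha> i j, \<lambda>i. - (int p ^ lam i * x i))"
  have "bil \<alpha> z g - bil \<alpha> z ?v \<in> \<int>"
    unfolding g relation_map_def a_map_def pmul_def by (rule bil_red_right)
  moreover have "bil \<alpha> z ?v \<in> \<int>"
    unfolding z bil_relation_right by (intro Ints_minus Ints_sum Ints_of_int)
  ultimately have "(bil \<alpha> z g - bil \<alpha> z ?v) + bil \<alpha> z ?v \<in> \<int>" by (rule Ints_add)
  then show ?thesis by simp
qed

lemma frac_bil_mult_left: "frac (bil \<alpha> (z \<otimes>\<^bsub>S\<^esub> z') u) = frac (bil \<alpha> z u + bil \<alpha> z' u)"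
  using frac_bil_mult_right[of "transposed \<alpha>" u z z'] unfolding bil_transposed[of \<alpha>] .

lemma bil_K_left: "h \<in> K (transposed \<alpha>) \<Longrightarrow> bil \<alpha> h u \<in> \<int>"
  using bil_K_right[of h "transposed \<alpha>" u] unfolding bil_transposed[of \<alpha>] .

lemma frac_bil_coset_right:
  assumes "Y \<in> carrier (L \<alpha>)" and "u \<in> Y" and "u' \<in> Y"
  shows "frac (bil \<alpha> z u') = frac (bil \<alpha> z u)"
proof -
  obtain g where "g \<in> K \<alpha>" "u' = g \<otimes>\<^bsub>S\<^esub> u"
    using S.FactGroup_mem_diff[OF K_subgroup] assms unfolding Lgrp_def by blast
  then show ?thesis
    using frac_bil_mult_right bil_K_right by (simp add: frac_add_int_left)
qed

lemma frac_bil_coset_left: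
  assumes "X \<in> carrier (L (transposed \<alpha>))" and "z \<in> X" and "z' \<in> X"
  shows "frac (bil \<alpha> z' u) = frac (bil \<alpha> z u)"
proof -
  obtain h where "h \<in> K (transposed \<alpha>)" "z' = h \<otimes>\<^bsub>S\<^esub> z"
    using S.FactGroup_mem_diff[OF K_subgroup] assms unfolding Lgrp_def by blast
  then show ?thesis
    using frac_bil_mult_left bil_K_left by (simp add: frac_add_int_left)
qed

definition dual_map :: "(nat \<Rightarrow> nat \<Rightarrow> int) \<Rightarrow> ((nat \<Rightarrow> int) \<times> (nat \<Rightarrow> int)) set
    \<Rightarrow> ((nat \<Rightarrow> int) \<times> (nat \<Rightarrow> int)) set \<Rightarrow> real" where
  "dual_map \<alpha> X = (\<lambda>Y\<in>carrier (L \<alpha>). frac (bil \<alpha> (SOME z. z \<in> X) (SOME u. u \<in> Y)))"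

lemma dual_map_eq:
  assumes "X \<in> carrier (L (transposed \<alpha>))" "z \<in> X" "Y \<in> carrier (L \<alpha>)" "u \<in> Y"
  shows "dual_map \<alpha> X Y = frac (bil \<alpha> z u)"
  using frac_bil_coset_left[OF assms(1) rep_in_coset[OF assms(1)] assms(2)]
    frac_bil_coset_right[OF assms(3) rep_in_coset[OF assms(3)] assms(4)] assms(3)
  by (simp add: dual_map_def)

lemma dual_map_pdual:
  assumes X: "X \<in> carrier (L (transposed \<alpha>))"
  shows "dual_map \<alpha> X \<in> carrier (pdual (L \<alpha>))"
proof -
  have "dual_map \<alpha> X \<in> hom (L \<alpha>) Tgrp"
  proof (rule homI)
    fix Y assume "Y \<in> carrier (L \<alpha>)"
    then show "dual_map \<alpha> X Y \<in> carrier Tgrp" by (simp add: dual_map_def Tgrp_def frac_lt_1)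
  next
    fix Y Y' assume Y: "Y \<in> carrier (L \<alpha>)" and Y': "Y' \<in> carrier (L \<alpha>)"
    let ?z = "SOME z. z \<in> X" and ?u = "SOME u. u \<in> Y" and ?u' = "SOME u. u \<in> Y'"
    have "dual_map \<alpha> X (Y \<otimes>\<^bsub>L \<alpha>\<^esub> Y') = frac (bil \<alpha> ?z (?u \<otimes>\<^bsub>S\<^esub> ?u'))"
      using X Y Y' by (intro dual_map_eq rep_in_coset mult_L_mem L_mult_closed)
    also have "\<dots> = frac (dual_map \<alpha> X Y + dual_map \<alpha> X Y')"
      using Y Y' by (simp add: frac_bil_mult_right dual_map_def)
    finally show "dual_map \<alpha> X (Y \<otimes>\<^bsub>L \<alpha>\<^esub> Y') = dual_map \<alpha> X Y \<otimes>\<^bsub>Tgrp\<^esub> dual_map \<alpha> X Y'"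
      by (simp add: Tgrp_def)
  qed
  then show ?thesis by (simp add: pdual_def dual_map_def)
qed

lemma dual_map_hom: "dual_map \<alpha> \<in> hom (L (transposed \<alpha>)) (pdual (L \<alpha>))"
proof (rule homI)
  fix X assume "X \<in> carrier (L (transposed \<alpha>))"
  then show "dual_map \<alpha> X \<in> carrier (pdual (L \<alpha>))" by (rule dual_map_pdual)
next
  fix X X' assume X: "X \<in> carrier (L (transposed \<alpha>))" and X': "X' \<in> carrier (L (transposed \<alpha>))"
  let ?z = "SOME z. z \<in> X" and ?z' = "SOME z. z \<in> X'"
  have "dual_map \<alpha> (X \<otimes>\<^bsub>L (transposed \<alpha>)\<^esub> X') Y = frac (dual_map \<alpha> X Y + dual_map \<alpha> X' Y)"
    if Y: "Y \<in> carrier (L \<alpha>)" for Y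
  proof -
    have "dual_map \<alpha> (X \<otimes>\<^bsub>L (transposed \<alpha>)\<^esub> X') Y = frac (bil \<alpha> (?z \<otimes>\<^bsub>S\<^esub> ?z') (SOME u. u \<in> Y))"
      using X X' Y by (intro dual_map_eq rep_in_coset mult_L_mem L_mult_closed)
    also have "\<dots> = frac (dual_map \<alpha> X Y + dual_map \<alpha> X' Y)"
      using Y by (simp add: frac_bil_mult_left dual_map_def)
    finally show ?thesis .
  qed
  then show "dual_map \<alpha> (X \<otimes>\<^bsub>L (transposed \<alpha>)\<^esub> X') = dual_map \<alpha> X \<otimes>\<^bsub>pdual (L \<alpha>)\<^esub> dual_map \<alpha> X'"
    by (auto simp: pdual_def dual_map_def)
qed

lemma bil_unit_fst: "k < l \<Longrightarrow> bil \<alpha> z (unit_vec k, \<lambda>_. 0) = of_int (snd z k) / P k"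
  by (simp add: bil_def unit_vec_def if_distrib if_distribR cong: if_cong)

lemma bil_unit_snd:
  "k < l \<Longrightarrow> bil \<alpha> z (\<lambda>_. 0, unit_vec k) = (of_int (fst z k) + (\<Sum>j<l. of_int (\<alpha> k j * snd z j) / P j)) / P k"
  by (simp add: bil_def unit_vec_def if_distrib if_distribR add_divide_distrib cong: if_cong)

lemma mem_K_transposed_if_dvd:
  assumes c: "c \<in> carrier (ZP p lam l)" and x: "x \<in> carrier (Zl l)"
    and y: "\<And>j. y j = int p ^ lam j * x j"
    and c_dvd: "\<And>k. k < l \<Longrightarrow> int p ^ lam k dvd c k + (\<Sum>j<l. \<alpha> k j * x j)"
  shows "(c, y) \<in> K (transposed \<alpha>)"
proof -
  have "c = red p lam l (\<lambda>j. \<Sum>i<l. - x i * \<alpha> j i)"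
  proof
    fix j show "c j = red p lam l (\<lambda>j. \<Sum>i<l. - x i * \<alpha> j i) j"
    proof (cases "j < l")
      case True
      have "c j = (- (\<Sum>i<l. \<alpha> j i * x i)) mod int p ^ lam j"
        using c c_dvd[OF True] True by (intro mod_eq_of_dvd_add) (auto simp: ZP_def)
      then show ?thesis using True by (simp add: red_def sum_negf[symmetric] mult.commute)
    next
      case False
      then show ?thesis using c by (simp add: red_def ZP_def)
    qed
  qed
  then have "(c, y) = relation_map (transposed \<alpha>) (\<lambda>j. - x j)"
    by (simp add: relation_map_def a_map_def pmul_def y fun_eq_iff)
  moreover have "(\<lambda>j. - x j) \<in> carrier (Zl l)" using x by (simp add: Zl_def)
  ultimately show ?thesis by (auto simp: K_eq_image)
qed

lemma mem_K_transposed_if_bil_Ints: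
  assumes z: "z \<in> carrier S" and ints: "\<And>u. u \<in> carrier S \<Longrightarrow> bil \<alpha> z u \<in> \<int>"
  shows "z \<in> K (transposed \<alpha>)"
proof -
  obtain c y where zcy: "z = (c, y)" by fastforce
  have c: "c \<in> carrier (ZP p lam l)" and y: "y \<in> carrier (Zl l)" using z by (auto simp: zcy Lsum_def)
  have y_dvd: "int p ^ lam k dvd y k" if k: "k < l" for k
  proof -
    have "(unit_vec k, \<lambda>_. 0) \<in> carrier S" using unit_vec_ZP[OF k] by (simp add: Lsum_def Zl_def)
    then have "bil \<alpha> z (unit_vec k, \<lambda>_. 0) \<in> \<int>" by (rule ints)
    then have "of_int (y k) / P k \<in> \<int>" using bil_unit_fst[OF k, of \<alpha> z] by (simp add: zcy)
    then show ?thesis using of_int_divide_in_Ints_iff[of "int p ^ lam k" "y k"] p_pos by simp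
  qed
  define x where "x j = (if j < l then y j div int p ^ lam j else 0)" for j
  have x_Zl: "x \<in> carrier (Zl l)" by (simp add: x_def Zl_def)
  have y_eq: "y j = int p ^ lam j * x j" for j
    using y_dvd y by (cases "j < l") (auto simp: x_def Zl_def)
  have c_dvd: "int p ^ lam k dvd c k + (\<Sum>j<l. \<alpha> k j * x j)" if k: "k < l" for k
  proof -
    have "(\<lambda>_. 0, unit_vec k) \<in> carrier S" using unit_vec_Zl[OF k] p_pos by (simp add: Lsum_def ZP_def)
    then have "bil \<alpha> z (\<lambda>_. 0, unit_vec k) \<in> \<int>" by (rule ints)
    moreover have "bil \<alpha> z (\<lambda>_. 0, unit_vec k) = of_int (c k + (\<Sum>j<l. \<alpha> k j * x j)) / P k"
      using p_pos by (simp add: bil_unit_snd[OF k] zcy y_eq)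
    ultimately have "of_int (c k + (\<Sum>j<l. \<alpha> k j * x j)) / of_int (int p ^ lam k) \<in> (\<int> :: real set)"
      by simp
    then show ?thesis using p_pos by (subst (asm) of_int_divide_in_Ints_iff) simp_all
  qed
  show ?thesis
    unfolding zcy by (rule mem_K_transposed_if_dvd[OF c x_Zl y_eq c_dvd])
qed

lemma dual_map_kernel:
  assumes X: "X \<in> carrier (L (transposed \<alpha>))" and one: "dual_map \<alpha> X = \<one>\<^bsub>pdual (L \<alpha>)\<^esub>"
  shows "X = \<one>\<^bsub>L (transposed \<alpha>)\<^esub>"
proof -
  have "bil \<alpha> (SOME z. z \<in> X) u \<in> \<int>" if u: "u \<in> carrier S" for u
  proof -
    have "dual_map \<alpha> X (K \<alpha> #>\<^bsub>S\<^esub> u) = 0" using one coset_in_L[OF u] by (simp add: pdual_def)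
    then show ?thesis
      using dual_map_eq[OF X rep_in_coset[OF X] coset_in_L[OF u] mem_own_coset[OF u]] by simp
  qed
  then have "(SOME z. z \<in> X) \<in> K (transposed \<alpha>)"
    by (intro mem_K_transposed_if_bil_Ints rep_in_carrier[OF X])
  then have "X = K (transposed \<alpha>)"
    using coset_rep[OF X] S.coset_join2[OF rep_in_carrier[OF X] K_subgroup] by simp
  then show ?thesis by (simp add: Lgrp_def)
qed

lemma red_Zl_hom: "(\<lambda>v. (red p lam l v, \<lambda>_. 0)) \<in> hom (Zl l) S"
  using p_pos by (intro homI) (auto simp: Lsum_def red_ZP DirProd_def ZP_def Zl_def red_def
      fun_eq_iff mod_add_left_eq mod_add_right_eq)

lemma snd_Zl_hom: "(\<lambda>v. (\<lambda>_. 0, v)) \<in> hom (Zl l) S"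
  using p_pos by (intro homI) (auto simp: Lsum_def DirProd_def ZP_def Zl_def red_def fun_eq_iff)

lemma character_S:
  assumes \<psi>: "\<psi> \<in> hom S Tgrp" and w: "w \<in> carrier (Zl l)"
  shows "\<psi> (red p lam l d, w) = frac ((\<Sum>j<l. of_int (d j) * \<psi> (red p lam l (unit_vec j), \<lambda>_. 0))
                                     + (\<Sum>i<l. of_int (w i) * \<psi> (\<lambda>_. 0, unit_vec i)))"
proof -
  define d' where "d' j = (if j < l then d j else 0)" for j
  have d': "d' \<in> carrier (Zl l)" by (simp add: d'_def Zl_def)
  have "red p lam l d = red p lam l d'" by (simp add: red_def d'_def fun_eq_iff)
  moreover have "(red p lam l d', w) = (red p lam l d', \<lambda>_. 0) \<otimes>\<^bsub>S\<^esub> (\<lambda>_. 0, w)"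
    by (simp add: Lsum_def DirProd_def ZP_def Zl_def red_def fun_eq_iff)
  ultimately have "\<psi> (red p lam l d, w) = frac (\<psi> (red p lam l d', \<lambda>_. 0) + \<psi> (\<lambda>_. 0, w))"
    using character_mult[OF \<psi>] hom_in_carrier[OF red_Zl_hom d'] hom_in_carrier[OF snd_Zl_hom w] by simp
  also have "\<psi> (red p lam l d', \<lambda>_. 0) = frac (\<Sum>j<l. of_int (d' j) * \<psi> (red p lam l (unit_vec j), \<lambda>_. 0))"
    using character_Zl[OF hom_compose[OF red_Zl_hom \<psi>] d'] by simp
  also have "\<psi> (\<lambda>_. 0, w) = frac (\<Sum>i<l. of_int (w i) * \<psi> (\<lambda>_. 0, unit_vec i))"
    using character_Zl[OF hom_compose[OF snd_Zl_hom \<psi>] w] by simp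
  also have "(\<Sum>j<l. of_int (d' j) * \<psi> (red p lam l (unit_vec j), \<lambda>_. 0))
      = (\<Sum>j<l. of_int (d j) * \<psi> (red p lam l (unit_vec j), \<lambda>_. 0))"
    by (intro sum.cong) (simp_all add: d'_def)
  finally show ?thesis by simp
qed

lemma character_S_coefficients:
  assumes \<psi>: "\<psi> \<in> hom S Tgrp" and vanish: "\<And>g. g \<in> K \<alpha> \<Longrightarrow> \<psi> g = 0" and k: "k < l"
  shows "P k * \<psi> (red p lam l (unit_vec k), \<lambda>_. 0) \<in> \<int>"
    and "P k * \<psi> (\<lambda>_. 0, unit_vec k) - (\<Sum>j<l. of_int (\<alpha> k j) * \<psi> (red p lam l (unit_vec j), \<lambda>_. 0)) \<in> \<int>"
proof -
  define \<mu> where "\<mu> j = \<psi> (red p lam l (unit_vec j), \<lambda>_. 0)" for j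
  define \<nu> where "\<nu> i = \<psi> (\<lambda>_. 0, unit_vec i)" for i
  have char: "\<psi> (red p lam l d, w) = frac ((\<Sum>j<l. of_int (d j) * \<mu> j) + (\<Sum>i<l. of_int (w i) * \<nu> i))"
    if "w \<in> carrier (Zl l)" for d w
    using character_S[OF \<psi> that] by (simp only: \<mu>_def \<nu>_def)
  have "(red p lam l (\<lambda>i. int p ^ lam k * unit_vec k i), \<lambda>_. 0) = \<one>\<^bsub>S\<^esub>"
    by (simp add: Lsum_def DirProd_def ZP_def Zl_def red_def unit_vec_def fun_eq_iff)
  then have "\<psi> (red p lam l (\<lambda>i. int p ^ lam k * unit_vec k i), \<lambda>_. 0) = 0"
    using vanish subgroup.one_closed[OF K_subgroup] by simp
  moreover have "\<psi> (red p lam l (\<lambda>i. int p ^ lam k * unit_vec k i), \<lambda>_. 0) = frac (P k * \<mu> k)"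
    using char[of "\<lambda>_. 0"] k by (simp add: Zl_def unit_vec_def if_distrib if_distribR cong: if_cong)
  ultimately show "P k * \<psi> (red p lam l (unit_vec k), \<lambda>_. 0) \<in> \<int>"
    by (simp add: \<mu>_def)
  let ?w = "\<lambda>i. - (int p ^ lam i * unit_vec k i)"
  have "(red p lam l (\<lambda>j. \<Sum>i<l. unit_vec k i * \<alpha> i j), ?w) \<in> K \<alpha>"
    unfolding K_eq_image using unit_vec_Zl[OF k]
    by (rule rev_image_eqI) (simp add: relation_map_def a_map_def pmul_def)
  then have "\<psi> (red p lam l (\<lambda>j. \<Sum>i<l. unit_vec k i * \<alpha> i j), ?w) = 0" by (rule vanish)
  moreover have "?w \<in> carrier (Zl l)" using k by (simp add: Zl_def unit_vec_def)
  ultimately have "frac ((\<Sum>j<l. of_int (\<Sum>i<l. unit_vec k i * \<alpha> i j) * \<mu> j) + (\<Sum>i<l. of_int (?w i) * \<nu> i)) = 0"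
    using char by simp
  then have "frac ((\<Sum>j<l. of_int (\<alpha> k j) * \<mu> j) - P k * \<nu> k) = 0"
    using k by (simp add: unit_vec_def if_distrib if_distribR cong: if_cong)
  then have "- ((\<Sum>j<l. of_int (\<alpha> k j) * \<mu> j) - P k * \<nu> k) \<in> \<int>"
    by (intro Ints_minus) simp
  then show "P k * \<psi> (\<lambda>_. 0, unit_vec k) - (\<Sum>j<l. of_int (\<alpha> k j) * \<psi> (red p lam l (unit_vec j), \<lambda>_. 0)) \<in> \<int>"
    by (simp add: \<mu>_def \<nu>_def)
qed

lemma bil_eq_linear_form:
  assumes y: "\<And>j. j < l \<Longrightarrow> of_int (y j) = P j * \<mu> j"
    and c: "\<And>k. k < l \<Longrightarrow> of_int (c k) = P k * \<nu> k - (\<Sum>j<l. of_int (\<alpha> k j) * \<mu> j) - P k * of_int (s k)"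
  shows "bil \<alpha> (c, y) (d, w)
      = (\<Sum>j<l. of_int (d j) * \<mu> j) + (\<Sum>i<l. of_int (w i) * \<nu> i) - (\<Sum>i<l. of_int (s i * w i))"
proof -
  define A where "A k = (\<Sum>j<l. of_int (\<alpha> k j) * \<mu> j)" for k
  have "(\<Sum>j<l. of_int (y j * d j + c j * w j) / P j)
      = (\<Sum>j<l. of_int (d j) * \<mu> j + of_int (w j) * \<nu> j - of_int (w j) * A j / P j - of_int (s j * w j))"
  proof (intro sum.cong refl)
    fix j assume "j \<in> {..<l}"
    then have j: "j < l" by simp
    have "of_int (y j * d j + c j * w j) / P j
        = (P j * \<mu> j * of_int (d j) + (P j * \<nu> j - A j - P j * of_int (s j)) * of_int (w j)) / P j"
      unfolding A_def by (simp only: of_int_add of_int_mult y[OF j] c[OF j])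
    also have "\<dots> = of_int (d j) * \<mu> j + of_int (w j) * \<nu> j - of_int (w j) * A j / P j - of_int (s j * w j)"
      using P_nonzero[of j] by (simp add: field_simps)
    finally show "of_int (y j * d j + c j * w j) / P j
        = of_int (d j) * \<mu> j + of_int (w j) * \<nu> j - of_int (w j) * A j / P j - of_int (s j * w j)" .
  qed
  moreover have "(\<Sum>j<l. of_int (\<alpha> i j * y j) / P j) = A i" for i
    unfolding A_def using y p_pos by (intro sum.cong refl) simp
  ultimately show ?thesis
    unfolding bil_def by (simp add: sum.distrib sum_subtractf)
qed

lemma bil_realizes_linear_form:
  assumes \<mu>: "\<And>j. j < l \<Longrightarrow> P j * \<mu> j \<in> \<int>"
    and \<nu>: "\<And>k. k < l \<Longrightarrow> P k * \<nu> k - (\<Sum>j<l. of_int (\<alpha> k j) * \<mu> j) \<in> \<int>"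
  obtains z where "z \<in> carrier S"
    and "\<And>d w. frac (bil \<alpha> z (d, w)) = frac ((\<Sum>j<l. of_int (d j) * \<mu> j) + (\<Sum>i<l. of_int (w i) * \<nu> i))"
proof -
  define t where "t k = \<lfloor>P k * \<nu> k - (\<Sum>j<l. of_int (\<alpha> k j) * \<mu> j)\<rfloor>" for k
  define s where "s k = t k div int p ^ lam k" for k
  define y where "y j = (if j < l then \<lfloor>P j * \<mu> j\<rfloor> else 0)" for j
  define c where "c k = (if k < l then t k mod int p ^ lam k else 0)" for k
  have y: "of_int (y j) = P j * \<mu> j" if "j < l" for j
    using \<mu>[OF that] that by (simp add: y_def)
  have c: "of_int (c k) = P k * \<nu> k - (\<Sum>j<l. of_int (\<alpha> k j) * \<mu> j) - P k * of_int (s k)"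
    if k: "k < l" for k
  proof -
    have "c k = t k - int p ^ lam k * s k" using k by (simp add: c_def s_def minus_div_mult_eq_mod[symmetric])
    moreover have "of_int (t k) = P k * \<nu> k - (\<Sum>j<l. of_int (\<alpha> k j) * \<mu> j)"
      using \<nu>[OF k] unfolding t_def by (elim Ints_cases) simp
    ultimately show ?thesis by simp
  qed
  have "(c, y) \<in> carrier S"
    using p_pos by (auto simp: Lsum_def ZP_def Zl_def c_def y_def)
  moreover have "frac (bil \<alpha> (c, y) (d, w))
      = frac ((\<Sum>j<l. of_int (d j) * \<mu> j) + (\<Sum>i<l. of_int (w i) * \<nu> i))" for d w
  proof -
    have "(\<Sum>i<l. of_int (s i * w i) :: real) \<in> \<int>" by (intro Ints_sum Ints_of_int)
    then show ?thesis unfolding frac_eq_iff_diff_Ints using bil_eq_linear_form[OF y c, of d w] by simp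
  qed
  ultimately show thesis by (rule that)
qed

lemma character_L_linear_form:
  assumes \<chi>: "\<chi> \<in> hom (L \<alpha>) Tgrp"
  obtains \<mu> \<nu> where "\<And>j. j < l \<Longrightarrow> P j * \<mu> j \<in> \<int>"
    and "\<And>k. k < l \<Longrightarrow> P k * \<nu> k - (\<Sum>j<l. of_int (\<alpha> k j) * \<mu> j) \<in> \<int>"
    and "\<And>d w. (d, w) \<in> carrier S
           \<Longrightarrow> \<chi> (K \<alpha> #>\<^bsub>S\<^esub> (d, w)) = frac ((\<Sum>j<l. of_int (d j) * \<mu> j) + (\<Sum>i<l. of_int (w i) * \<nu> i))"
proof -
  define \<psi> where "\<psi> = (\<lambda>u. \<chi> (K \<alpha> #>\<^bsub>S\<^esub> u))"
  have \<psi>: "\<psi> \<in> hom S Tgrp"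
    using hom_compose[OF normal.r_coset_hom_Mod[OF S.subgroup_imp_normal[OF K_subgroup]] \<chi>[unfolded Lgrp_def]]
    by (simp add: \<psi>_def o_def Lgrp_def)
  have vanish: "\<psi> g = 0" if g: "g \<in> K \<alpha>" for g
  proof -
    have "K \<alpha> #>\<^bsub>S\<^esub> g = \<one>\<^bsub>L \<alpha>\<^esub>"
      using S.coset_join2[OF _ K_subgroup g] subgroup.subset[OF K_subgroup] g by (auto simp: Lgrp_def)
    then show ?thesis
      using hom_one[OF \<chi> L_group comm_group.axioms(2)[OF Tgrp_comm_group]]
      by (simp add: \<psi>_def Tgrp_def)
  qed
  show thesis
  proof (rule that)
    show "P j * \<psi> (red p lam l (unit_vec j), \<lambda>_. 0) \<in> \<int>" if "j < l" for j
      by (rule character_S_coefficients(1)[OF \<psi> vanish that])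
    show "P k * \<psi> (\<lambda>_. 0, unit_vec k) - (\<Sum>j<l. of_int (\<alpha> k j) * \<psi> (red p lam l (unit_vec j), \<lambda>_. 0)) \<in> \<int>"
      if "k < l" for k
      by (rule character_S_coefficients(2)[OF \<psi> vanish that])
    fix d w assume "(d, w) \<in> carrier S"
    then have "d \<in> carrier (ZP p lam l)" "w \<in> carrier (Zl l)" by (auto simp: Lsum_def)
    then show "\<chi> (K \<alpha> #>\<^bsub>S\<^esub> (d, w)) = frac ((\<Sum>j<l. of_int (d j) * \<psi> (red p lam l (unit_vec j), \<lambda>_. 0))
        + (\<Sum>i<l. of_int (w i) * \<psi> (\<lambda>_. 0, unit_vec i)))"
      using character_S[OF \<psi>, of w d] by (simp add: red_eq_self \<psi>_def)
  qed
qed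

lemma dual_map_surj:
  assumes \<chi>: "\<chi> \<in> carrier (pdual (L \<alpha>))"
  shows "\<chi> \<in> dual_map \<alpha> ` carrier (L (transposed \<alpha>))"
proof -
  have \<chi>_hom: "\<chi> \<in> hom (L \<alpha>) Tgrp" and \<chi>_ext: "\<chi> \<in> extensional (carrier (L \<alpha>))"
    using \<chi> by (simp_all add: pdual_def)
  obtain \<mu> \<nu> where \<mu>: "\<And>j. j < l \<Longrightarrow> P j * \<mu> j \<in> \<int>"
    and \<nu>: "\<And>k. k < l \<Longrightarrow> P k * \<nu> k - (\<Sum>j<l. of_int (\<alpha> k j) * \<mu> j) \<in> \<int>"
    and \<chi>_eq: "\<And>d w. (d, w) \<in> carrier S
           \<Longrightarrow> \<chi> (K \<alpha> #>\<^bsub>S\<^esub> (d, w)) = frac ((\<Sum>j<l. of_int (d j) * \<mu> j) + (\<Sum>i<l. of_int (w i) * \<nu> i))"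
    using character_L_linear_form[OF \<chi>_hom] by blast
  obtain z where z: "z \<in> carrier S" and z_bil: "\<And>d w. frac (bil \<alpha> z (d, w))
      = frac ((\<Sum>j<l. of_int (d j) * \<mu> j) + (\<Sum>i<l. of_int (w i) * \<nu> i))"
    using bil_realizes_linear_form[OF \<mu> \<nu>] by blast
  define X where "X = K (transposed \<alpha>) #>\<^bsub>S\<^esub> z"
  have X: "X \<in> carrier (L (transposed \<alpha>))" and zX: "z \<in> X"
    unfolding X_def by (rule coset_in_L[OF z], rule mem_own_coset[OF z])
  have "dual_map \<alpha> X Y = \<chi> Y" if Y: "Y \<in> carrier (L \<alpha>)" for Y
  proof -
    obtain d w where u: "(SOME u. u \<in> Y) = (d, w)" by fastforce
    have "dual_map \<alpha> X Y = frac (bil \<alpha> z (d, w))"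
      using dual_map_eq[OF X zX Y rep_in_coset[OF Y]] by (simp add: u)
    also have "\<dots> = \<chi> (K \<alpha> #>\<^bsub>S\<^esub> (d, w))"
      unfolding z_bil using \<chi>_eq rep_in_carrier[OF Y] by (simp add: u)
    also have "\<dots> = \<chi> Y"
      using coset_rep[OF Y] by (simp add: u)
    finally show ?thesis .
  qed
  then have "dual_map \<alpha> X = \<chi>"
    using \<chi>_ext by (auto simp: dual_map_def extensional_def)
  then show ?thesis using X by blast
qed

lemma dual_map_iso: "dual_map \<alpha> \<in> iso (L (transposed \<alpha>)) (pdual (L \<alpha>))"
proof -
  interpret group_hom "L (transposed \<alpha>)" "pdual (L \<alpha>)" "dual_map \<alpha>"
    using L_group pdual_comm_group[OF group.is_monoid[OF L_group]] dual_map_hom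
    by (simp add: group_hom_def group_hom_axioms_def comm_group.axioms(2))
  show ?thesis
    unfolding iso_iff using dual_map_surj dual_map_kernel by blast
qed

lemma pairing_frac_div:
  "pairing l (\<lambda>i. if i < l then frac (of_int (w i) / P i) else 0) c = frac (\<Sum>j<l. of_int (c j * w j) / P j)"
proof -
  have "pairing l (\<lambda>i. if i < l then frac (of_int (w i) / P i) else 0) c
      = frac (\<Sum>i<l. frac (of_int (w i) / P i) * of_int (c i))"
    unfolding pairing_def by (intro arg_cong[where f = frac] sum.cong) auto
  also have "\<dots> = frac (\<Sum>i<l. of_int (w i) / P i * of_int (c i))"
    by (rule frac_sum_frac_mult)
  also have "\<dots> = frac (\<Sum>j<l. of_int (c j * w j) / P j)"
    by (simp add: mult.commute)
  finally show ?thesis .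
qed

lemma qmap_eq: "qmap p lam l X = (\<lambda>i. if i < l then frac (of_int (snd (SOME z. z \<in> X) i) / P i) else 0)"
  by (simp add: qmap_def Let_def)

lemma qmap_Tp: "qmap p lam l X \<in> Tp p lam l"
proof -
  have "P i * frac (of_int v / P i) \<in> \<int>" for i v
  proof -
    have "P i * frac (of_int v / P i) = of_int (v - int p ^ lam i * \<lfloor>of_int v / P i\<rfloor>)"
      using P_nonzero[of i] by (simp add: frac_def algebra_simps)
    then show ?thesis by simp
  qed
  then show ?thesis by (auto simp: Tp_def qmap_eq frac_lt_1)
qed

lemma pairing_unit_vec: "j < l \<Longrightarrow> pairing l \<mu> (unit_vec j) = frac (\<mu> j)"
  by (simp add: pairing_def unit_vec_def if_distrib if_distribR cong: if_cong)

lemma dual_map_fmap: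
  assumes c: "c \<in> carrier (ZP p lam l)"
  shows "dual_map \<alpha> (fmap p lam l (transposed \<alpha>) c) = dual_incl p lam l \<alpha> c"
proof
  fix Y
  have cS: "(c, \<lambda>_. 0) \<in> carrier S" using c by (simp add: Lsum_def Zl_def)
  show "dual_map \<alpha> (fmap p lam l (transposed \<alpha>) c) Y = dual_incl p lam l \<alpha> c Y"
  proof (cases "Y \<in> carrier (L \<alpha>)")
    case True
    have "dual_map \<alpha> (fmap p lam l (transposed \<alpha>) c) Y = frac (bil \<alpha> (c, \<lambda>_. 0) (SOME u. u \<in> Y))"
      unfolding fmap_def
      by (rule dual_map_eq[OF coset_in_L[OF cS] mem_own_coset[OF cS] True rep_in_coset[OF True]])
    also have "\<dots> = pairing l (qmap p lam l Y) c"
      by (simp add: bil_def qmap_eq pairing_frac_div)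
    finally show ?thesis using True by (simp add: dual_incl_def)
  next
    case False
    then show ?thesis by (simp add: dual_map_def dual_incl_def)
  qed
qed

lemma dual_map_fmap_pairing:
  assumes X: "X \<in> carrier (L (transposed \<alpha>))" and c: "c \<in> carrier (ZP p lam l)"
  shows "dual_map \<alpha> X (fmap p lam l \<alpha> c) = pairing l (qmap p lam l X) c"
proof -
  have cS: "(c, \<lambda>_. 0) \<in> carrier S" using c by (simp add: Lsum_def Zl_def)
  have "dual_map \<alpha> X (fmap p lam l \<alpha> c) = frac (bil \<alpha> (SOME z. z \<in> X) (c, \<lambda>_. 0))"
    unfolding fmap_def
    by (rule dual_map_eq[OF X rep_in_coset[OF X] coset_in_L[OF cS] mem_own_coset[OF cS]])
  also have "\<dots> = pairing l (qmap p lam l X) c"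
    by (simp add: bil_def qmap_eq pairing_frac_div mult.commute)
  finally show ?thesis .
qed

lemma dual_proj_dual_map:
  assumes X: "X \<in> carrier (L (transposed \<alpha>))"
  shows "dual_proj p lam l \<alpha> (dual_map \<alpha> X) = qmap p lam l X"
proof -
  note pairing_eq = dual_map_fmap_pairing[OF X]
  show ?thesis
    unfolding dual_proj_def
  proof (rule the_equality)
    fix \<mu> assume \<mu>: "\<mu> \<in> Tp p lam l \<and>
      (\<forall>c\<in>carrier (ZP p lam l). dual_map \<alpha> X (fmap p lam l \<alpha> c) = pairing l \<mu> c)"
    show "\<mu> = qmap p lam l X"
    proof
      fix j show "\<mu> j = qmap p lam l X j"
      proof (cases "j < l")
        case True
        have "frac (\<mu> j) = frac (qmap p lam l X j)"
          using \<mu> pairing_eq[OF unit_vec_ZP[OF True]] unit_vec_ZP[OF True]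
          by (simp add: pairing_unit_vec[OF True])
        moreover have "\<mu> j \<in> {0..<1}" "qmap p lam l X j \<in> {0..<1}"
          using \<mu> qmap_Tp True by (auto simp: Tp_def)
        ultimately show ?thesis by simp
      next
        case False
        then show ?thesis using \<mu> qmap_Tp by (simp add: Tp_def)
      qed
    qed
  qed (use qmap_Tp pairing_eq in blast)
qed

end

theorem theorem10p3:
  fixes p l :: nat and lam :: "nat \<Rightarrow> nat" and \<alpha> :: "nat \<Rightarrow> nat \<Rightarrow> int"
  assumes "prime p"
    and "\<forall>i<l. 0 < lam i"
    and "\<forall>i j. i \<le> j \<and> j < l \<longrightarrow> lam j \<le> lam i"
  shows "ext_equiv (ZP p lam l)
           (Lgrp p lam l (\<lambda>i j. \<alpha> j i)) (fmap p lam l (\<lambda>i j. \<alpha> j i)) (qmap p lam l)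
           (pdual (Lgrp p lam l \<alpha>)) (dual_incl p lam l \<alpha>) (dual_proj p lam l \<alpha>)"
proof -
  interpret dual_setting p lam l
    using prime_gt_1_nat[OF assms(1)] assms(2) by unfold_locales
  show ?thesis
    unfolding ext_equiv_def using dual_map_iso dual_map_fmap dual_proj_dual_map by blast
qed

end
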